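(* Let $A\ge 3$, $N\ge 2$, and let $w:\mathbf{Prof}\to\mathbf{Pref}$ be a social welfare function satisfying IIA with pairwise comparison functions $s_1,\dots,s_A:\{0,e,1\}^N\to\{0,e,1\}$, and satisfying Unanimity. If $w$ satisfies Unrestricted Domain, then for every $j\in\{1,\dots,A\}$ and every $r\in\{0,1\}^N$ we have $s_j(r)\in\{0,1\}$.
   Context: Let $\mathcal{A}=\{a_1,\dots,a_A\}$ and $N\ge 2$ individuals; $e$ is a third symbol distinct from $0,1$. Let $\sigma(i)=i+1$ for $i<A$, $\sigma(A)=1$. A preference relation is $t\in\{0,e,1\}^A$, where $t_i$ records $a_i$ versus $a_{\sigma(i)}$: $0$ means $a_i\prec a_{\sigma(i)}$, $1$ means $a_{\sigma(i)}\prec a_i$, $e$ means $a_i\sim a_{\sigma(i)}$. It corresponds to a weak order if some complete transitive relation on $\mathcal{A}$ realizes all these comparisons; otherwise it is a preference cycle. $\mathbf{Pref}=\{0,e,1\}^A$. A profile is an $A\times N$ matrix over $\{0,e,1\}$ whose every column corresponds to a weak order; $\mathbf{Prof}$ is the set of profiles, written in row form $(r_1,\dots,r_A)$ with $r_j\in\{0,e,1\}^N$ (row $j$ lists all individuals' comparisons of $a_j$ versus $a_{\sigma(j)}$). A social welfare function is a map $w:\mathbf{Prof}\to\mathbf{Pref}$. It satisfies IIA if there are functions $s_1,\dots,s_A:\{0,e,1\}^N\to\{0,e,1\}$ (pairwise comparison functions) with $w(r_1,\dots,r_A)=(s_1(r_1),\dots,s_A(r_A))$ for every profile. It satisfies Unanimity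 if $s_j(\Delta x)=x$ for all $j$ and $x\in\{0,1\}$, where $\Delta x=(x,\dots,x)\in\{0,e,1\}^N$. It satisfies Unrestricted Domain if $w(m)$ corresponds to a weak order for every profile $m$. *)

theory Defs
  imports Main
begin

datatype cmp = Zero | E | One

text \<open>Alternatives are indexed 0..A-1 (a_{i+1} in the paper is index i);
  sigma i = (i+1) mod A is the cyclic successor.
  A preference relation is a list t of length A over cmp; t!i compares a_i with a_(sigma i).\<close>

definition sigma :: "nat \<Rightarrow> nat \<Rightarrow> nat" where
  "sigma A i = Suc i mod A"

text \<open>Relation R (R x y meaning x is weakly preferred-or-equal, i.e. y \<preceq> x ... we use
  R x y = "x is at least as good as y") realizes comparison c between a and b.\<close>
definition realizes :: "(nat \<Rightarrow> nat \<Rightarrow> bool) \<Rightarrow> nat \<Rightarrow> nat \<Rightarrow> cmp \<Rightarrow> bool" where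
  "realizes R a b c = (case c of
       Zero \<Rightarrow> R b a \<and> \<not> R a b
     | One \<Rightarrow> R a b \<and> \<not> R b a
     | E \<Rightarrow> R a b \<and> R b a)"

definition weak_order_on :: "nat set \<Rightarrow> (nat \<Rightarrow> nat \<Rightarrow> bool) \<Rightarrow> bool" where
  "weak_order_on S R = ((\<forall>x\<in>S. \<forall>y\<in>S. R x y \<or> R y x) \<and>
                        (\<forall>x\<in>S. \<forall>y\<in>S. \<forall>z\<in>S. R x y \<longrightarrow> R y z \<longrightarrow> R x z))"

definition is_weak_order :: "nat \<Rightarrow> cmp list \<Rightarrow> bool" where
  "is_weak_order A t = (length t = A \<and>
     (\<exists>R. weak_order_on {..<A} R \<and> (\<forall>i<A. realizes R i (sigma A i) (t ! i))))"

text \<open>A profile in row form: list of A rows, each a list of length N; row j lists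
  all individuals' comparisons of a_j vs a_(sigma j). Every column is a weak order.\<close>
definition column :: "cmp list list \<Rightarrow> nat \<Rightarrow> cmp list" where
  "column m k = map (\<lambda>r. r ! k) m"

definition is_profile :: "nat \<Rightarrow> nat \<Rightarrow> cmp list list \<Rightarrow> bool" where
  "is_profile A N m = (length m = A \<and> (\<forall>r\<in>set m. length r = N) \<and>
                       (\<forall>k<N. is_weak_order A (column m k)))"

definition IIA :: "nat \<Rightarrow> nat \<Rightarrow> (cmp list list \<Rightarrow> cmp list) \<Rightarrow> (nat \<Rightarrow> cmp list \<Rightarrow> cmp) \<Rightarrow> bool" where
  "IIA A N w s = (\<forall>m. is_profile A N m \<longrightarrow> w m = map (\<lambda>j. s j (m ! j)) [0..<A])"

definition Unanimity :: "nat \<Rightarrow> nat \<Rightarrow> (nat \<Rightarrow> cmp list \<Rightarrow> cmp) \<Rightarrow> bool" where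
  "Unanimity A N s = (\<forall>j<A. \<forall>x\<in>{Zero, One}. s j (replicate N x) = x)"

definition Unrestricted_Domain :: "nat \<Rightarrow> nat \<Rightarrow> (cmp list list \<Rightarrow> cmp list) \<Rightarrow> bool" where
  "Unrestricted_Domain A N w = (\<forall>m. is_profile A N m \<longrightarrow> is_weak_order A (w m))"

end

theory Submission imports Defs begin

text \<open>Suppose \<open>s\<^sub>j r = e\<close> for some 0/1 row \<open>r\<close>. Put \<open>r\<close> in row \<open>j\<close>, its reversal in
  row \<open>\<sigma> j\<close>, and a constant \<open>c \<in> {0, 1}\<close> in every other row. Each column is then a linear
  order of the alternatives arranged around the cycle, so the matrix is a profile, and by IIA
  and Unanimity the social preference is \<open>e\<close> at \<open>j\<close>, \<open>x = s\<^sub>\<sigma>\<^sub>j (reversed r)\<close> at \<open>\<sigma> j\<close> and \<open>c\<close>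
  elsewhere. Choosing \<open>c = 0\<close> if \<open>x \<noteq> 1\<close> and \<open>c = 1\<close> if \<open>x = 1\<close>, all comparisons around the cycle
  point the same way, one of them strictly (there is a third alternative since \<open>A \<ge> 3\<close>),
  which is a preference cycle, contradicting Unrestricted Domain. The argument does not
  need \<open>N \<ge> 2\<close>.\<close>

fun flip :: "cmp \<Rightarrow> cmp" where
  "flip Zero = One"
| "flip One = Zero"
| "flip E = E"

lemma flip_eq_iff: "flip a = b \<longleftrightarrow> a = flip b"
  by (cases a; cases b) auto

lemma sigma_less: "i < A \<Longrightarrow> sigma A i < A"
  by (simp add: sigma_def)

lemma sigma_eq_if: "i < A \<Longrightarrow> sigma A i = (if Suc i < A then Suc i else 0)"
proof -
  assume "i < A"
  then have "Suc i < A \<or> Suc i = A"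
    by linarith
  then show ?thesis
    by (auto simp: sigma_def)
qed

lemma sigma_neq: "2 \<le> A \<Longrightarrow> i < A \<Longrightarrow> sigma A i \<noteq> i"
  by (auto simp: sigma_eq_if)

lemma sigma_add_pred_mod:
  assumes "p < A"
  shows "(sigma A p + (A - 1)) mod A = p"
proof -
  have "(sigma A p + (A - 1)) mod A = (Suc p + (A - 1)) mod A"
    by (simp add: sigma_def mod_add_left_eq)
  also have "Suc p + (A - 1) = p + A"
    using assms by simp
  finally show ?thesis
    using assms by simp
qed

lemma is_weak_order_map_flip:
  assumes "is_weak_order A t"
  shows "is_weak_order A (map flip t)"
proof -
  from assms obtain R where wo: "weak_order_on {..<A} R"
    and re: "\<forall>i<A. realizes R i (sigma A i) (t ! i)" and len: "length t = A"
    unfolding is_weak_order_def by blast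
  have "weak_order_on {..<A} (\<lambda>x y. R y x)"
    using wo unfolding weak_order_on_def by blast
  moreover have "realizes (\<lambda>x y. R y x) i (sigma A i) (map flip t ! i)" if "i < A" for i
    using re len that by (cases "t ! i") (auto simp: realizes_def)
  ultimately show ?thesis
    using len unfolding is_weak_order_def by auto
qed

text \<open>If no comparison around the cycle is \<open>1\<close>, then \<open>a\<^sub>i \<preceq> a\<^sub>\<sigma>\<^sub>i\<close> for all \<open>i\<close>, and going once
  around the cycle from \<open>a\<^sub>\<sigma>\<^sub>p\<close> back to \<open>a\<^sub>p\<close> contradicts a strict \<open>a\<^sub>p \<prec> a\<^sub>\<sigma>\<^sub>p\<close>.\<close>
lemma not_is_weak_order_if_no_One:
  assumes no_One: "\<forall>i<A. t ! i \<noteq> One" and p: "p < A" and "t ! p = Zero"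
  shows "\<not> is_weak_order A t"
proof
  assume "is_weak_order A t"
  then obtain R where wo: "weak_order_on {..<A} R"
    and re: "\<forall>i<A. realizes R i (sigma A i) (t ! i)"
    unfolding is_weak_order_def by blast
  have step: "R (sigma A i) i" if "i < A" for i
    using re no_One that by (cases "t ! i") (auto simp: realizes_def)
  have trans: "R x z" if "x < A" "y < A" "z < A" "R x y" "R y z" for x y z
    using wo that unfolding weak_order_on_def by blast
  have refl: "R x x" if "x < A" for x
    using wo that unfolding weak_order_on_def by blast
  have around: "R ((x + k) mod A) x" if x: "x < A" for x k
  proof (induction k)
    case 0
    show ?case using refl x by simp
  next
    case (Suc k)
    have A: "0 < A"
      using x by simp
    have "(x + Suc k) mod A = sigma A ((x + k) mod A)"
      by (simp add: sigma_def mod_Suc_eq)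
    then have "R ((x + Suc k) mod A) ((x + k) mod A)"
      using step A by simp
    with Suc x A show ?case
      by (meson trans mod_less_divisor)
  qed
  have "R ((sigma A p + (A - 1)) mod A) (sigma A p)"
    by (rule around[OF sigma_less[OF p]])
  then have "R p (sigma A p)"
    unfolding sigma_add_pred_mod[OF p] .
  moreover have "\<not> R p (sigma A p)"
    using re p \<open>t ! p = Zero\<close> by (auto simp: realizes_def)
  ultimately show False by simp
qed

lemma not_is_weak_order_if_no_flip:
  assumes c: "c \<in> {Zero, One}" and no_flip: "\<forall>i<A. t ! i \<noteq> flip c"
    and p: "p < A" and "t ! p = c"
  shows "\<not> is_weak_order A t"
proof
  assume wo: "is_weak_order A t"
  show False
  proof (cases "c = Zero")
    case True
    then show False
      using not_is_weak_order_if_no_One[OF _ p] wo no_flip \<open>t ! p = c\<close> by simp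
  next
    case False
    have "length t = A"
      using wo by (simp add: is_weak_order_def)
    then have "\<not> is_weak_order A (map flip t)"
      by (intro not_is_weak_order_if_no_One[OF _ p])
        (use c False p no_flip \<open>t ! p = c\<close> in \<open>auto simp: flip_eq_iff\<close>)
    then show False
      using wo is_weak_order_map_flip by blast
  qed
qed

text \<open>\<open>one_at A p\<close> is the linear order \<open>a\<^sub>\<sigma>\<^sub>p \<prec> a\<^sub>\<sigma>\<^sub>\<sigma>\<^sub>p \<prec> \<dots> \<prec> a\<^sub>p\<close>.\<close>
definition one_at :: "nat \<Rightarrow> nat \<Rightarrow> cmp list" where
  "one_at A p = map (\<lambda>i. if i = p then One else Zero) [0..<A]"

lemma is_weak_order_one_at:
  assumes "p < A" and "2 \<le> A"
  shows "is_weak_order A (one_at A p)"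
proof -
  define rank where "rank i = (if i \<le> p then i + (A - Suc p) else i - Suc p)" for i
  define R where "R x y = (rank y \<le> rank x)" for x y
  have "weak_order_on {..<A} R"
    unfolding weak_order_on_def R_def by auto
  moreover have "realizes R i (sigma A i) (one_at A p ! i)" if i: "i < A" for i
    using i assms unfolding R_def rank_def realizes_def one_at_def sigma_eq_if[OF i] by auto
  moreover have "length (one_at A p) = A"
    by (simp add: one_at_def)
  ultimately show ?thesis
    unfolding is_weak_order_def by blast
qed

definition two_row_profile :: "nat \<Rightarrow> nat \<Rightarrow> nat \<Rightarrow> cmp list \<Rightarrow> cmp \<Rightarrow> cmp list list" where
  "two_row_profile A N j r c =
     map (\<lambda>i. if i = j then r else if i = sigma A j then map flip r else replicate N c) [0..<A]"

lemma nth_two_row_profile: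
  "i < A \<Longrightarrow> two_row_profile A N j r c ! i =
     (if i = j then r else if i = sigma A j then map flip r else replicate N c)"
  by (simp add: two_row_profile_def)

lemma is_profile_two_row_profile:
  assumes A: "2 \<le> A" and j: "j < A" and r: "length r = N" "set r \<subseteq> {Zero, One}"
    and c: "c \<in> {Zero, One}"
  shows "is_profile A N (two_row_profile A N j r c)"
  unfolding is_profile_def
proof (intro conjI allI impI ballI)
  show "length (two_row_profile A N j r c) = A"
    by (simp add: two_row_profile_def)
  show "length x = N" if "x \<in> set (two_row_profile A N j r c)" for x
    using that r by (auto simp: two_row_profile_def)
  fix k assume k: "k < N"
  have rk: "r ! k \<in> {Zero, One}"
    using r k nth_mem by blast
  have col: "column (two_row_profile A N j r c) k ! i =
      (if i = j then r ! k else if i = sigma A j then flip (r ! k) else c)" if "i < A" for i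
    using that r k by (simp add: column_def two_row_profile_def)
  have len_col: "length (column (two_row_profile A N j r c) k) = A"
    by (simp add: column_def two_row_profile_def)
  define p where "p = (if r ! k = flip c then j else sigma A j)"
  have p: "p < A"
    using j sigma_less p_def by simp
  have "column (two_row_profile A N j r c) k ! i = map (if c = Zero then id else flip) (one_at A p) ! i"
    if "i < A" for i
    using that c rk sigma_neq[OF A j] by (auto simp: col one_at_def p_def)
  then have "column (two_row_profile A N j r c) k = map (if c = Zero then id else flip) (one_at A p)"
    by (intro nth_equalityI) (simp_all add: len_col one_at_def)
  then show "is_weak_order A (column (two_row_profile A N j r c) k)"
    using is_weak_order_one_at[OF p A] is_weak_order_map_flip by (cases "c = Zero") simp_all
qed

lemma nth_social_preference_two_row_profile:
  assumes "IIA A N w s" and "Unanimity A N s" and "is_profile A N (two_row_profile A N j r c)"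
    and "c \<in> {Zero, One}" and i: "i < A"
  shows "w (two_row_profile A N j r c) ! i =
    (if i = j then s j r else if i = sigma A j then s (sigma A j) (map flip r) else c)"
proof -
  have "w (two_row_profile A N j r c) = map (\<lambda>l. s l (two_row_profile A N j r c ! l)) [0..<A]"
    using assms(1,3) unfolding IIA_def by blast
  moreover have "s i (replicate N c) = c"
    using assms(2,4) i unfolding Unanimity_def by blast
  ultimately show ?thesis
    using i by (simp add: nth_two_row_profile)
qed

lemma exists_third_index:
  assumes "3 \<le> (A::nat)"
  obtains q where "q < A" "q \<noteq> a" "q \<noteq> b"
proof -
  have "\<not> {..<A} \<subseteq> {a, b}"
  proof
    assume "{..<A} \<subseteq> {a, b}"
    then have "card {..<A} \<le> card {a, b}"
      by (intro card_mono) auto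
    also have "\<dots> \<le> 2"
      by (simp add: card_insert_if)
    finally show False
      using assms by simp
  qed
  then show ?thesis
    using that by auto
qed

theorem mainTheorem5:
  fixes A N :: nat
    and w :: "cmp list list \<Rightarrow> cmp list"
    and s :: "nat \<Rightarrow> cmp list \<Rightarrow> cmp"
  assumes "A \<ge> 3" and "N \<ge> 2"
    and "IIA A N w s"
    and "Unanimity A N s"
    and "Unrestricted_Domain A N w"
  shows "\<forall>j<A. \<forall>r. length r = N \<and> set r \<subseteq> {Zero, One} \<longrightarrow> s j r \<in> {Zero, One}"
proof (intro allI impI)
  fix j r assume j: "j < A" and r: "length r = N \<and> set r \<subseteq> {Zero, One}"
  show "s j r \<in> {Zero, One}"
  proof (rule ccontr)
    assume "s j r \<notin> {Zero, One}"
    then have sj: "s j r = E" by (cases "s j r") auto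
    obtain q where q: "q < A" "q \<noteq> j" "q \<noteq> sigma A j"
      using exists_third_index[OF \<open>A \<ge> 3\<close>] .
    define x where "x = s (sigma A j) (map flip r)"
    define c where "c = (if x = One then One else Zero)"
    have c: "c \<in> {Zero, One}" and x: "x \<noteq> flip c"
      by (auto simp: c_def)
    let ?m = "two_row_profile A N j r c"
    have m: "is_profile A N ?m"
      using is_profile_two_row_profile \<open>A \<ge> 3\<close> j r c by simp
    have wm: "w ?m ! i = (if i = j then E else if i = sigma A j then x else c)" if "i < A" for i
      using nth_social_preference_two_row_profile[OF assms(3,4) m c that] sj x_def by simp
    have "\<not> is_weak_order A (w ?m)"
      by (rule not_is_weak_order_if_no_flip[OF c _ q(1)]) (use q c x in \<open>auto simp: wm\<close>)
    then show False
      using assms(5) m unfolding Unrestricted_Domain_def by blast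
  qed
qed

end
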